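(* Let $G$ be a connected cubic (3-regular) graph of order $n$ that is not isomorphic to the Heawood graph. Then $\gamma^{0}_{st}(G)\ge -\frac{2n}{3}$.
   Context: For a vertex $v$ of a graph $G=(V,E)$, $N(v)$ is its open neighborhood, and for $f:V\to\mathbb{R}$ and $B\subseteq V$ write $f(B)=\sum_{v\in B}f(v)$; $f(V)$ is the weight of $f$. An inverse signed total dominating function (ISTDF) of $G$ is a function $f:V\to\{-1,1\}$ such that $f(N(v))\le 0$ for every $v\in V$. The inverse signed total domination number $\gamma^{0}_{st}(G)$ is the maximum weight of an ISTDF of $G$. The Heawood graph is the unique 3-regular graph of girth 6 on 14 vertices (the incidence graph of the Fano plane). *)

theory Defs
  imports Complex_Main
begin

definition simple_graph :: "'a set \<Rightarrow> ('a \<Rightarrow> 'a \<Rightarrow> bool) \<Rightarrow> bool" where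
  "simple_graph V E \<longleftrightarrow> finite V \<and> (\<forall>u v. E u v \<longrightarrow> u \<in> V \<and> v \<in> V)
     \<and> (\<forall>u v. E u v \<longrightarrow> E v u) \<and> (\<forall>v. \<not> E v v)"

definition nbhd :: "'a set \<Rightarrow> ('a \<Rightarrow> 'a \<Rightarrow> bool) \<Rightarrow> 'a \<Rightarrow> 'a set" where
  "nbhd V E v = {u \<in> V. E v u}"

definition cubic :: "'a set \<Rightarrow> ('a \<Rightarrow> 'a \<Rightarrow> bool) \<Rightarrow> bool" where
  "cubic V E \<longleftrightarrow> (\<forall>v \<in> V. card (nbhd V E v) = 3)"

definition connected_graph :: "'a set \<Rightarrow> ('a \<Rightarrow> 'a \<Rightarrow> bool) \<Rightarrow> bool" where
  "connected_graph V E \<longleftrightarrow> V \<noteq> {} \<and>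
     (\<forall>u \<in> V. \<forall>v \<in> V. (u, v) \<in> {(x, y). E x y}\<^sup>*)"

definition istdf :: "'a set \<Rightarrow> ('a \<Rightarrow> 'a \<Rightarrow> bool) \<Rightarrow> ('a \<Rightarrow> int) \<Rightarrow> bool" where
  "istdf V E f \<longleftrightarrow> (\<forall>v \<in> V. f v \<in> {-1, 1}) \<and> (\<forall>v \<in> V. sum f (nbhd V E v) \<le> 0)"

definition inv_signed_total_dom_num :: "'a set \<Rightarrow> ('a \<Rightarrow> 'a \<Rightarrow> bool) \<Rightarrow> int" where
  "inv_signed_total_dom_num V E = Max {sum f V | f. istdf V E f}"

text \<open>Heawood graph: incidence graph of the Fano plane. Vertices 0..6 are the points
of Z/7, vertices 7..13 are the lines L_j = {j, j+1, j+3} (mod 7), j = 0..6.\<close>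
definition fano_inc :: "nat \<Rightarrow> nat \<Rightarrow> bool" where
  "fano_inc p j \<longleftrightarrow> p < 7 \<and> j < 7 \<and> (p + 7 - j) mod 7 \<in> {0, 1, 3}"

definition heawood_adj :: "nat \<Rightarrow> nat \<Rightarrow> bool" where
  "heawood_adj a b \<longleftrightarrow> a < 14 \<and> b < 14 \<and>
     ((a < 7 \<and> 7 \<le> b \<and> fano_inc a (b - 7)) \<or> (b < 7 \<and> 7 \<le> a \<and> fano_inc b (a - 7)))"

definition iso_heawood :: "'a set \<Rightarrow> ('a \<Rightarrow> 'a \<Rightarrow> bool) \<Rightarrow> bool" where
  "iso_heawood V E \<longleftrightarrow> (\<exists>h. bij_betw h V {0..<14} \<and>
     (\<forall>u \<in> V. \<forall>v \<in> V. E u v \<longleftrightarrow> heawood_adj (h u) (h v)))"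

end

theory Submission
  imports Defs
begin

locale triangle_covered_graph =
  fixes W :: "'a set" and R :: "'a \<Rightarrow> 'a \<Rightarrow> bool" and d :: nat
  assumes finite_W: "finite W"
    and adj_sym: "R u v \<Longrightarrow> R v u"
    and adj_irrefl: "\<not> R u u"
    and degree_le: "u \<in> W \<Longrightarrow> card {v\<in>W. R u v} \<le> d"
    and edge_in_triangle: "u \<in> W \<Longrightarrow> v \<in> W \<Longrightarrow> R u v \<Longrightarrow> \<exists>t\<in>W. R u t \<and> R v t"
    and connected: "u \<in> W \<Longrightarrow> v \<in> W \<Longrightarrow> (u, v) \<in> {(x, y). x \<in> W \<and> y \<in> W \<and> R x y}\<^sup>*"
begin

definition nbr :: "'a \<Rightarrow> 'a set" where
  "nbr u = {v\<in>W. R u v}"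

definition closed_nbhd :: "'a set \<Rightarrow> 'a set" where
  "closed_nbhd I = {v\<in>W. v \<in> I \<or> (\<exists>u\<in>I. R u v)}"

definition independent :: "'a set \<Rightarrow> bool" where
  "independent I \<longleftrightarrow> (\<forall>u\<in>I. \<forall>v\<in>I. \<not> R u v)"

lemma finite_nbr: "finite (nbr u)"
  using finite_W by (simp add: nbr_def)

lemma card_nbr_le: "u \<in> W \<Longrightarrow> card (nbr u) \<le> d"
  using degree_le by (simp add: nbr_def)

lemma card_insert_nbr_le:
  assumes "u \<in> W" 
  shows "card (insert u (nbr u)) \<le> d + 1"
proof -
  have "u \<notin> nbr u" using adj_irrefl by (simp add: nbr_def)
  then show ?thesis using card_nbr_le[OF assms] finite_nbr by simp
qed

lemma closed_nbhd_subset: "closed_nbhd I \<subseteq> W"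
  by (auto simp: closed_nbhd_def)

lemma subset_closed_nbhd: "I \<subseteq> W \<Longrightarrow> I \<subseteq> closed_nbhd I"
  by (auto simp: closed_nbhd_def)

lemma closed_nbhd_singleton: "u \<in> W \<Longrightarrow> closed_nbhd {u} = insert u (nbr u)"
  by (auto simp: closed_nbhd_def nbr_def)

lemma closed_nbhd_insert:
  "w \<in> W \<Longrightarrow> closed_nbhd (insert w I) = closed_nbhd I \<union> insert w (nbr w)"
  by (auto simp: closed_nbhd_def nbr_def)

lemma independent_insert:
  "independent I \<Longrightarrow> w \<in> W \<Longrightarrow> w \<notin> closed_nbhd I \<Longrightarrow> independent (insert w I)"
  using adj_irrefl adj_sym unfolding independent_def closed_nbhd_def by blast

lemma connected_edge_leaving:
  assumes "S \<subseteq> W" "s \<in> S" "u \<in> W - S"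
  obtains w s' where "w \<in> W - S" "s' \<in> S" "R s' w"
proof -
  have "(s, u) \<in> {(x, y). x \<in> W \<and> y \<in> W \<and> R x y}\<^sup>*"
    using connected assms by blast
  then have "u \<in> S \<or> (\<exists>w\<in>W - S. \<exists>s'\<in>S. R s' w)"
    by (induction rule: rtrancl_induct) (use assms in auto)
  then show ?thesis using assms that by blast
qed

lemma card_closed_nbhd_insert:
  assumes "w \<in> W"
  shows "card (closed_nbhd (insert w I)) + card (nbr w \<inter> closed_nbhd I)
    \<le> card (closed_nbhd I) + d + 1"
proof -
  let ?N = "insert w (nbr w)" and ?D = "closed_nbhd I"
  have "closed_nbhd (insert w I) = ?D \<union> (?N - ?D)"
    using assms by (auto simp: closed_nbhd_def nbr_def)
  then have "card (closed_nbhd (insert w I)) \<le> card ?D + card (?N - ?D)"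
    by (metis card_Un_le)
  moreover have "card (?N - ?D) + card (nbr w \<inter> ?D) \<le> card ?N"
  proof -
    have "card ((?N - ?D) \<union> (nbr w \<inter> ?D)) = card (?N - ?D) + card (nbr w \<inter> ?D)"
      by (rule card_Un_disjoint) (use finite_nbr in auto)
    moreover have "card ((?N - ?D) \<union> (nbr w \<inter> ?D)) \<le> card ?N"
      by (rule card_mono) (use finite_nbr in auto)
    ultimately show ?thesis by simp
  qed
  moreover have "card ?N \<le> d + 1"
    using card_insert_nbr_le[OF assms] .
  ultimately show ?thesis by linarith
qed

lemma exists_card_maximal:
  assumes "P J" "\<And>I. P I \<Longrightarrow> I \<subseteq> W"
  obtains I where "P I" "\<And>I'. P I' \<Longrightarrow> card I' \<le> card I"
proof -
  have "\<forall>I. P I \<longrightarrow> card I < card W + 1"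
    using assms(2) card_mono[OF finite_W] by (simp add: less_Suc_eq_le)
  then show ?thesis
    using Lattices_Big.ex_has_greatest_nat[of P J card] assms(1) that by blast
qed

text \<open>Greedy growth: a vertex just outside the closed neighbourhood of I has a neighbour
  inside it, so adding it costs at most d new vertices.\<close>
lemma large_independent_set_from_seed:
  assumes "J \<subseteq> W" "independent J" "J \<noteq> {}" "card (closed_nbhd J) \<le> d * card J"
  shows "\<exists>I\<subseteq>W. independent I \<and> card W \<le> d * card I"
proof -
  define P where
    "P I \<longleftrightarrow> I \<subseteq> W \<and> independent I \<and> I \<noteq> {} \<and> card (closed_nbhd I) \<le> d * card I" for I
  obtain I where I: "P I" and max: "\<And>I'. P I' \<Longrightarrow> card I' \<le> card I"
    using exists_card_maximal[of P J] assms unfolding P_def by blast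
  have IW: "I \<subseteq> W" and indep: "independent I" and "I \<noteq> {}"
    and card_I: "card (closed_nbhd I) \<le> d * card I"
    using I unfolding P_def by auto
  have "closed_nbhd I = W"
  proof (rule ccontr)
    assume "closed_nbhd I \<noteq> W"
    then obtain u where "u \<in> W - closed_nbhd I" using closed_nbhd_subset by blast
    moreover obtain i where "i \<in> closed_nbhd I"
      using \<open>I \<noteq> {}\<close> subset_closed_nbhd[OF IW] by blast
    ultimately obtain w s where w: "w \<in> W - closed_nbhd I" "s \<in> closed_nbhd I" "R s w"
      using connected_edge_leaving[OF closed_nbhd_subset] by metis
    have "s \<in> nbr w \<inter> closed_nbhd I"
      using w adj_sym closed_nbhd_subset by (auto simp: nbr_def)
    then have "card (nbr w \<inter> closed_nbhd I) \<ge> 1"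
      using finite_nbr by (metis One_nat_def Suc_leI card_gt_0_iff empty_iff finite_Int)
    moreover have "w \<notin> I"
      using w subset_closed_nbhd[OF IW] by blast
    then have "card (insert w I) = card I + 1"
      using finite_subset[OF IW finite_W] by simp
    ultimately have "P (insert w I)"
      using card_closed_nbhd_insert[of w I] card_I independent_insert[OF indep] w IW
      unfolding P_def by auto
    then show False
      using max \<open>card (insert w I) = card I + 1\<close> by fastforce
  qed
  then show ?thesis using IW indep card_I by auto
qed

context
  assumes no_large_independent: "\<nexists>I. I \<subseteq> W \<and> independent I \<and> card W \<le> d * card I"
begin

lemma card_closed_nbhd_gt:
  "J \<subseteq> W \<Longrightarrow> independent J \<Longrightarrow> J \<noteq> {} \<Longrightarrow> d * card J < card (closed_nbhd J)"
  using large_independent_set_from_seed no_large_independent not_le by blast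

lemma card_nbr_eq: 
  assumes "u \<in> W" 
  shows "card (nbr u) = d"
proof -
  have "d < card (insert u (nbr u))"
    using card_closed_nbhd_gt[of "{u}"] assms adj_irrefl
    by (simp add: closed_nbhd_singleton independent_def)
  then show ?thesis
    using card_nbr_le[OF assms] finite_nbr by (simp add: card_insert_if split: if_splits)
qed

lemma boundary_vertex_extension:
  assumes I: "I \<subseteq> W" "independent I" "card (closed_nbhd I) \<le> d * card I + 1"
    and w: "w \<in> W" "w \<notin> closed_nbhd I" "s \<in> closed_nbhd I" "R s w"
  shows "nbr w \<inter> closed_nbhd I = {s}"
    and "card (closed_nbhd (insert w I)) \<le> d * card (insert w I) + 1"
proof -
  have s: "s \<in> nbr w \<inter> closed_nbhd I"
    using w adj_sym closed_nbhd_subset by (auto simp: nbr_def)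
  have "w \<notin> I"
    using w subset_closed_nbhd[OF I(1)] by blast
  then have card_insert: "card (insert w I) = card I + 1"
    using finite_subset[OF I(1) finite_W] by simp
  have "d * card (insert w I) < card (closed_nbhd (insert w I))"
    using card_closed_nbhd_gt independent_insert I w by simp
  then have "card (nbr w \<inter> closed_nbhd I) \<le> Suc 0"
    using card_closed_nbhd_insert[OF w(1), of I] I(3) card_insert by simp
  then show "nbr w \<inter> closed_nbhd I = {s}"
    using s card_le_Suc0_iff_eq[of "nbr w \<inter> closed_nbhd I"] finite_nbr by blast
  then show "card (closed_nbhd (insert w I)) \<le> d * card (insert w I) + 1"
    using card_closed_nbhd_insert[OF w(1), of I] I(3) card_insert by simp
qed

text \<open>Below, D is the closed neighbourhood of a maximal independent set whose greedy
  extension fails, so every vertex of the remainder W - D sees D in exactly one vertex.\<close>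
context
  fixes D :: "'a set"
  assumes D: "D \<subseteq> W" "card (W - D) \<le> d"
    and unique: "\<And>w s. w \<in> W - D \<Longrightarrow> s \<in> D \<Longrightarrow> R s w \<Longrightarrow> nbr w \<inter> D = {s}"
begin

lemma remainder_structure:
  assumes x: "x \<in> W - D"
  shows "\<exists>s\<in>D. nbr x \<inter> D = {s}" and "W - D - {x} \<subseteq> nbr x" and "card (W - D) = d"
proof -
  have fin: "finite (W - D)" using finite_W by simp
  have "card (W - D) > 0" using x fin card_gt_0_iff by blast
  then have card_x: "card (W - D - {x}) + 1 \<le> d"
    using D(2) x fin by (simp add: card_Diff_singleton)
  have "\<exists>s\<in>D. R s x"
  proof (rule ccontr)
    assume "\<not> (\<exists>s\<in>D. R s x)"
    then have "nbr x \<subseteq> W - D - {x}"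
      using adj_sym adj_irrefl by (auto simp: nbr_def)
    then have "card (nbr x) \<le> card (W - D - {x})"
      using fin by (intro card_mono) auto
    then show False using card_nbr_eq x card_x by simp
  qed
  then show "\<exists>s\<in>D. nbr x \<inter> D = {s}" using unique x by blast
  then obtain s where s: "nbr x \<inter> D = {s}" by blast
  have "nbr x - {s} \<subseteq> W - D - {x}"
    using s adj_irrefl by (auto simp: nbr_def)
  moreover have "card (nbr x - {s}) + 1 = d"
  proof -
    have "s \<in> nbr x" using s by blast
    then have "card (nbr x) > 0" using finite_nbr card_gt_0_iff by blast
    then show ?thesis
      using \<open>s \<in> nbr x\<close> card_nbr_eq x finite_nbr by (simp add: card_Diff_singleton)
  qed
  ultimately have eq: "nbr x - {s} = W - D - {x}"
    using card_x card_mono[of "W - D - {x}" "nbr x - {s}"] fin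
    by (intro card_subset_eq) auto
  then show "W - D - {x} \<subseteq> nbr x" by blast
  show "card (W - D) = d"
    using eq \<open>card (nbr x - {s}) + 1 = d\<close> \<open>card (W - D) > 0\<close> x fin
    by (simp add: card_Diff_singleton)
qed

lemma remainder_adjacency_uniform:
  assumes r1: "r1 \<in> W - D" and r2: "r2 \<in> W - D" and z: "z \<in> D" "R r1 z"
  shows "R r2 z"
proof (rule ccontr)
  assume not_adj: "\<not> R r2 z"
  have zW: "z \<in> W" using z D by blast
  obtain t where t: "t \<in> W" "R r1 t" "R z t"
    using edge_in_triangle[OF _ zW z(2)] r1 by blast
  have "nbr r1 \<inter> D = {z}" using unique[OF r1 z(1) adj_sym[OF z(2)]] .
  moreover have "t \<in> nbr r1" "t \<noteq> z" using t adj_irrefl by (auto simp: nbr_def)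
  ultimately have tD: "t \<in> W - D" using t by blast
  have ne: "r1 \<noteq> r2" "t \<noteq> r2" "r1 \<noteq> t" "z \<noteq> r2"
    using z r2 not_adj t(2) adj_sym[OF t(3)] adj_irrefl[of r1] by auto
  define J where "J = {r2, z}"
  have J: "J \<subseteq> W" "independent J" "J \<noteq> {}"
    using r2 zW not_adj adj_sym[of z r2] adj_irrefl by (auto simp: independent_def J_def)
  \<comment> \<open>r2 and z have the two common neighbours r1 and t, so J is a cheap seed.\<close>
  have "card J = 2" using ne by (simp add: J_def)
  moreover have "card (closed_nbhd J) \<le> d * 2"
  proof -
    let ?A = "insert r2 (nbr r2)" and ?B = "insert z (nbr z)"
    have cn: "closed_nbhd J = ?A \<union> ?B"
      using r2 zW by (auto simp: closed_nbhd_def nbr_def J_def)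
    have "{r1, t} \<subseteq> ?A \<inter> ?B"
      using remainder_structure(2)[OF r2] r1 tD ne t adj_sym[OF z(2)] by (auto simp: nbr_def)
    then have "2 \<le> card (?A \<inter> ?B)"
      using card_mono[of "?A \<inter> ?B" "{r1, t}"] finite_nbr ne by simp
    moreover have "card ?A \<le> d + 1" "card ?B \<le> d + 1"
      using card_insert_nbr_le r2 zW by simp_all
    moreover have "finite ?A" "finite ?B" using finite_nbr by simp_all
    then have "card ?A + card ?B = card (?A \<union> ?B) + card (?A \<inter> ?B)"
      by (rule card_Un_Int)
    ultimately show ?thesis unfolding cn by linarith
  qed
  ultimately show False using card_closed_nbhd_gt[OF J] by simp
qed

text \<open>The unique neighbour s in D of a remainder vertex is then adjacent to the whole remainder,
  so s together with the remainder is a closed set of d + 1 vertices.\<close>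
lemma card_eq_if_remainder:
  assumes x0: "x0 \<in> W - D"
  shows "card W = d + 1"
proof -
  obtain s where s: "s \<in> D" "nbr x0 \<inter> D = {s}" using remainder_structure(1)[OF x0] by blast
  have sW: "s \<in> W" using s D by blast
  have all_s: "R r s" if "r \<in> W - D" for r
    using remainder_adjacency_uniform[OF x0 that s(1)] s(2) by (auto simp: nbr_def)
  have "W - D \<subseteq> nbr s" using adj_sym[OF all_s] by (auto simp: nbr_def)
  then have nbr_s: "nbr s = W - D"
    using card_nbr_eq[OF sW] remainder_structure(3)[OF x0] finite_nbr
    by (metis card_subset_eq)
  define K where "K = insert s (W - D)"
  have KW: "K \<subseteq> W" using sW by (auto simp: K_def)
  have closed: "v \<in> K" if "u \<in> K" "v \<in> W" "R u v" for u v
  proof (cases "u = s")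
    case True then show ?thesis using nbr_s that by (auto simp: K_def nbr_def)
  next
    case False
    then have u: "u \<in> W - D" using that K_def by simp
    have "nbr u \<inter> D = {s}" using unique[OF u s(1) adj_sym[OF all_s[OF u]]] .
    then show ?thesis using that u by (auto simp: K_def nbr_def)
  qed
  have "K = W"
  proof (rule ccontr)
    assume "K \<noteq> W"
    then obtain u where "u \<in> W - K" using KW by blast
    then obtain w s' where "w \<in> W - K" "s' \<in> K" "R s' w"
      using connected_edge_leaving[OF KW, of s] K_def by blast
    then show False using closed by blast
  qed
  moreover have "card K = d + 1"
    using remainder_structure(3)[OF x0] s finite_W by (simp add: K_def)
  ultimately show ?thesis by simp
qed

end

lemma card_eq_if_no_large_independent:
  assumes "W \<noteq> {}"
  shows "card W = d + 1"
proof (rule ccontr)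
  assume not_complete: "card W \<noteq> d + 1"
  define P where "P I \<longleftrightarrow> I \<subseteq> W \<and> independent I \<and> I \<noteq> {}
    \<and> card (closed_nbhd I) \<le> d * card I + 1 \<and> closed_nbhd I \<noteq> W" for I
  obtain r where r: "r \<in> W" using assms by blast
  have "r \<notin> nbr r" using adj_irrefl by (simp add: nbr_def)
  then have "card (closed_nbhd {r}) = d + 1"
    using closed_nbhd_singleton[OF r] card_nbr_eq[OF r] finite_nbr by simp
  then have "P {r}"
    using r not_complete adj_irrefl by (auto simp: P_def independent_def)
  then obtain I where I: "P I" and max: "\<And>I'. P I' \<Longrightarrow> card I' \<le> card I"
    by (rule exists_card_maximal) (auto simp: P_def)
  define D where "D = closed_nbhd I"
  have IW: "I \<subseteq> W" and indep: "independent I" and "I \<noteq> {}"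
    and card_I: "card D \<le> d * card I + 1" and "D \<noteq> W"
    using I unfolding P_def D_def by auto
  have DW: "D \<subseteq> W" using closed_nbhd_subset D_def by simp
  have unique: "nbr w \<inter> D = {s}" if "w \<in> W - D" "s \<in> D" "R s w" for w s
    unfolding D_def
    by (rule boundary_vertex_extension(1)[OF IW indep]) (use card_I that in \<open>auto simp: D_def\<close>)
  have full: "closed_nbhd (insert w I) = W" if w: "w \<in> W - D" "s \<in> D" "R s w" for w s
  proof (rule ccontr)
    assume "closed_nbhd (insert w I) \<noteq> W"
    moreover have "card (closed_nbhd (insert w I)) \<le> d * card (insert w I) + 1"
      by (rule boundary_vertex_extension(2)[OF IW indep]) (use card_I w in \<open>auto simp: D_def\<close>)
    ultimately have "P (insert w I)"
      using IW indep independent_insert w unfolding P_def D_def by auto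
    moreover have "w \<notin> I" using w subset_closed_nbhd[OF IW] unfolding D_def by blast
    then have "card (insert w I) = card I + 1"
      using finite_subset[OF IW finite_W] by simp
    ultimately show False
      using max[of "insert w I"] by simp
  qed
  obtain u where u: "u \<in> W - D" using \<open>D \<noteq> W\<close> DW by blast
  obtain i where i: "i \<in> D"
    using \<open>I \<noteq> {}\<close> subset_closed_nbhd[OF IW] unfolding D_def by blast
  obtain w0 s0 where w0: "w0 \<in> W - D" "s0 \<in> D" "R s0 w0"
    by (rule connected_edge_leaving[OF DW i u])
  have "W = D \<union> insert w0 (nbr w0)"
    using full[OF w0] closed_nbhd_insert[of w0 I] w0(1) unfolding D_def by simp
  then have "W - D \<subseteq> insert w0 (nbr w0) - {s0}"
    using w0(2) by blast
  moreover have "s0 \<in> nbr w0" using unique[OF w0] by blast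
  then have "card (insert w0 (nbr w0) - {s0}) \<le> d"
    using card_insert_nbr_le[of w0] w0(1) finite_nbr by simp
  ultimately have "card (W - D) \<le> d"
    using card_mono[of "insert w0 (nbr w0) - {s0}" "W - D"] finite_nbr by simp
  then show False
    using card_eq_if_remainder[OF DW _ unique w0(1)] not_complete by simp
qed

end

theorem large_independent_set:
  assumes "W \<noteq> {}" and "\<not> (card W = d + 1 \<and> (\<forall>u\<in>W. card (nbr u) = d))"
  shows "\<exists>I\<subseteq>W. independent I \<and> card W \<le> d * card I"
proof (rule ccontr)
  assume no_large: "\<not> ?thesis"
  then have "card W = d + 1"
    using card_eq_if_no_large_independent[OF _ assms(1)] by blast
  moreover have "\<forall>u\<in>W. card (nbr u) = d"
    using card_nbr_eq no_large by blast
  ultimately show False using assms(2) by blast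
qed

end

lemma reachable_connected:
  fixes R :: "'a \<Rightarrow> 'a \<Rightarrow> bool"
  assumes sym: "\<And>u v. R u v \<Longrightarrow> R v u" and "R\<^sup>*\<^sup>* v u" "R\<^sup>*\<^sup>* v w"
  shows "(u, w) \<in> {(x, y). R\<^sup>*\<^sup>* v x \<and> R\<^sup>*\<^sup>* v y \<and> R x y}\<^sup>*"
proof -
  let ?RC = "{(x, y). R\<^sup>*\<^sup>* v x \<and> R\<^sup>*\<^sup>* v y \<and> R x y}"
  have from_v: "(v, x) \<in> ?RC\<^sup>*" if "R\<^sup>*\<^sup>* v x" for x
    using that
  proof (induction rule: rtranclp_induct)
    case (step y z)
    then have "(y, z) \<in> ?RC" by auto
    with step.IH show ?case by (rule rtrancl_into_rtrancl)
  qed simp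
  have "?RC\<inverse> = ?RC" using sym by auto
  then have "(u, v) \<in> ?RC\<^sup>*" using rtrancl_converseI[OF from_v[OF assms(2)]] by simp
  then show ?thesis using from_v[OF assms(3)] by simp
qed

lemma independent_set_by_components:
  fixes R :: "'a \<Rightarrow> 'a \<Rightarrow> bool" and k :: nat
  assumes "finite W"
    and sym: "\<And>u v. R u v \<Longrightarrow> R v u"
    and "\<And>u v. u \<in> W \<Longrightarrow> R u v \<Longrightarrow> v \<in> W"
    and component: "\<And>C. C \<subseteq> W \<Longrightarrow> C \<noteq> {} \<Longrightarrow> (\<And>u v. u \<in> C \<Longrightarrow> R u v \<Longrightarrow> v \<in> C) \<Longrightarrow>
      (\<And>u v. u \<in> C \<Longrightarrow> v \<in> C \<Longrightarrow> (u, v) \<in> {(x, y). x \<in> C \<and> y \<in> C \<and> R x y}\<^sup>*) \<Longrightarrow>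
      \<exists>I\<subseteq>C. (\<forall>a\<in>I. \<forall>b\<in>I. \<not> R a b) \<and> card C \<le> k * card I"
  shows "\<exists>I\<subseteq>W. (\<forall>a\<in>I. \<forall>b\<in>I. \<not> R a b) \<and> card W \<le> k * card I"
proof -
  have "\<exists>I\<subseteq>U. (\<forall>a\<in>I. \<forall>b\<in>I. \<not> R a b) \<and> card U \<le> k * card I"
    if "U \<subseteq> W" "\<And>u v. u \<in> U \<Longrightarrow> R u v \<Longrightarrow> v \<in> U" for U
    using that
  proof (induction "card U" arbitrary: U rule: less_induct)
    case less
    have finU: "finite U" using less.prems(1) assms(1) by (rule finite_subset)
    show ?case
    proof (cases "U = {}")
      case False
      then obtain v where v: "v \<in> U" by blast
      define C where "C = {u. R\<^sup>*\<^sup>* v u}"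
      have C_closed: "w \<in> C" if "u \<in> C" "R u w" for u w
        using that by (auto simp: C_def)
      have "C \<subseteq> U"
      proof
        fix u assume "u \<in> C"
        then have "R\<^sup>*\<^sup>* v u" by (simp add: C_def)
        then show "u \<in> U"
          by (induction rule: rtranclp_induct) (use v less.prems(2) in blast)+
      qed
      have "v \<in> C" by (simp add: C_def)
      have "(u, w) \<in> {(x, y). x \<in> C \<and> y \<in> C \<and> R x y}\<^sup>*" if "u \<in> C" "w \<in> C" for u w
        using reachable_connected[OF sym] that by (simp add: C_def)
      then obtain I where I: "I \<subseteq> C" "\<forall>a\<in>I. \<forall>b\<in>I. \<not> R a b" "card C \<le> k * card I"
        using component[of C] \<open>C \<subseteq> U\<close> less.prems(1) C_closed \<open>v \<in> C\<close> by blast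
      have rest_closed: "w \<in> U - C" if "u \<in> U - C" "R u w" for u w
        using that less.prems(2) C_closed[OF _ sym[OF that(2)]] by blast
      have "card (U - C) < card U"
        using \<open>v \<in> C\<close> v finU by (intro psubset_card_mono) auto
      then obtain I' where I': "I' \<subseteq> U - C" "\<forall>a\<in>I'. \<forall>b\<in>I'. \<not> R a b"
        "card (U - C) \<le> k * card I'"
        using less.hyps[of "U - C"] less.prems(1) rest_closed by blast
      have "\<not> R a b" if "a \<in> I \<union> I'" "b \<in> I \<union> I'" for a b
      proof
        assume "R a b"
        then have "a \<in> C \<longleftrightarrow> b \<in> C" using C_closed sym by blast
        then show False using that I(1,2) I'(1,2) \<open>R a b\<close> by blast
      qed
      moreover have "card U = card C + card (U - C)"
        using \<open>C \<subseteq> U\<close> finU by (metis card_Diff_subset card_mono finite_subset le_add_diff_inverse)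
      moreover have "card (I \<union> I') = card I + card I'"
        using I(1) I'(1) \<open>C \<subseteq> U\<close> finU
        by (intro card_Un_disjoint) (auto intro: finite_subset)
      ultimately show ?thesis
        using I(1,3) I'(1,3) \<open>C \<subseteq> U\<close>
        by (intro exI[of _ "I \<union> I'"]) (auto simp: distrib_left)
    qed simp
  qed
  then show ?thesis using assms(3) by blast
qed

definition common_nbr :: "'a set \<Rightarrow> ('a \<Rightarrow> 'a \<Rightarrow> bool) \<Rightarrow> 'a \<Rightarrow> 'a \<Rightarrow> bool" where
  "common_nbr V E u v \<longleftrightarrow> u \<in> V \<and> v \<in> V \<and> u \<noteq> v \<and> nbhd V E u \<inter> nbhd V E v \<noteq> {}"

definition open_packing :: "'a set \<Rightarrow> ('a \<Rightarrow> 'a \<Rightarrow> bool) \<Rightarrow> 'a set \<Rightarrow> bool" where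
  "open_packing V E I \<longleftrightarrow> I \<subseteq> V \<and> (\<forall>u\<in>I. \<forall>v\<in>I. u \<noteq> v \<longrightarrow> nbhd V E u \<inter> nbhd V E v = {})"

lemma open_packing_iff_common_nbr:
  "open_packing V E I \<longleftrightarrow> I \<subseteq> V \<and> (\<forall>u\<in>I. \<forall>v\<in>I. \<not> common_nbr V E u v)"
  by (auto simp: open_packing_def common_nbr_def)

lemma simple_graph_finite_nbhd: "simple_graph V E \<Longrightarrow> finite (nbhd V E v)"
  by (simp add: simple_graph_def nbhd_def)

lemma card_nbhd_Int_open_packing:
  assumes "simple_graph V E" "open_packing V E I" "v \<in> V"
  shows "card (nbhd V E v \<inter> I) \<le> 1"
proof -
  have "a = b" if "a \<in> nbhd V E v \<inter> I" "b \<in> nbhd V E v \<inter> I" for a b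
  proof (rule ccontr)
    assume "a \<noteq> b"
    moreover have "v \<in> nbhd V E a \<inter> nbhd V E b"
      using that assms(1,3) by (auto simp: nbhd_def simple_graph_def)
    ultimately show False using that assms(2) by (auto simp: open_packing_def)
  qed
  then show ?thesis
    using card_le_Suc0_iff_eq[of "nbhd V E v \<inter> I"] simple_graph_finite_nbhd[OF assms(1)] by auto
qed

text \<open>In a graph of minimum degree 2 an open packing I gives an ISTDF, +1 on I and -1 elsewhere:
  every open neighbourhood contains at most one vertex of I.\<close>
lemma istdf_open_packing:
  assumes "simple_graph V E" "\<forall>v\<in>V. 2 \<le> card (nbhd V E v)" "open_packing V E I"
  shows "istdf V E (\<lambda>v. if v \<in> I then 1 else -1)"
  unfolding istdf_def
proof (intro conjI ballI)
  fix v assume v: "v \<in> V"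
  let ?N = "nbhd V E v"
  have fin: "finite ?N" using simple_graph_finite_nbhd[OF assms(1)] .
  have "(\<Sum>u\<in>?N. if u \<in> I then 1 else -1 :: int) = int (card (?N \<inter> I)) - int (card (?N - I))"
    using fin by (simp add: sum.If_cases Diff_eq)
  moreover have "card ?N = card (?N \<inter> I) + card (?N - I)"
    using fin card_Int_Diff by blast
  ultimately show "(\<Sum>u\<in>?N. if u \<in> I then 1 else -1 :: int) \<le> 0"
    using card_nbhd_Int_open_packing[OF assms(1,3) v] assms(2) v by force
qed simp

lemma sum_sign_indicator:
  assumes "finite V" "I \<subseteq> V"
  shows "(\<Sum>v\<in>V. if v \<in> I then 1 else -1 :: int) = 2 * int (card I) - int (card V)"
proof -
  have "(\<Sum>v\<in>V. if v \<in> I then 1 else -1 :: int) = int (card I) - int (card (V - I))"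
    using assms by (simp add: sum.If_cases Diff_eq Int_absorb1)
  moreover have "card V = card I + card (V - I)"
    using assms card_Int_Diff[of V I] by (simp add: Int_absorb1)
  ultimately show ?thesis by simp
qed

lemma istdf_weight_le:
  assumes "simple_graph V E" "istdf V E f"
  shows "sum f V \<le> inv_signed_total_dom_num V E"
proof -
  let ?S = "{sum f V | f. istdf V E f}"
  have "?S \<subseteq> {- int (card V) .. int (card V)}"
  proof
    fix y assume "y \<in> ?S"
    then obtain g where g: "y = sum g V" "istdf V E g" by blast
    have "\<bar>sum g V\<bar> \<le> (\<Sum>v\<in>V. \<bar>g v\<bar>)" by (rule sum_abs)
    also have "\<dots> = (\<Sum>v\<in>V. 1)"
      using g(2) unfolding istdf_def by (intro sum.cong) auto
    finally show "y \<in> {- int (card V) .. int (card V)}" using g(1) by auto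
  qed
  then have "finite ?S" using finite_subset by blast
  then show ?thesis
    unfolding inv_signed_total_dom_num_def using assms(2) by (intro Max_ge) auto
qed

lemma inv_signed_total_dom_num_ge_open_packing:
  assumes "simple_graph V E" "\<forall>v\<in>V. 2 \<le> card (nbhd V E v)" "open_packing V E I"
  shows "2 * int (card I) - int (card V) \<le> inv_signed_total_dom_num V E"
  using istdf_weight_le[OF assms(1) istdf_open_packing[OF assms]]
    sum_sign_indicator[of V I] assms(1,3)
  by (simp add: simple_graph_def open_packing_def)

lemma even_sum_card_nbhd:
  assumes "simple_graph V E"
  shows "even (\<Sum>v\<in>V. card (nbhd V E v))"
proof -
  let ?S = "SIGMA v:V. nbhd V E v"
  let ?C = "(\<lambda>(a, b). {(a, b), (b, a)}) ` ?S"
  have fin: "finite ?S"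
    using assms simple_graph_finite_nbhd[OF assms] by (intro finite_SigmaI) (simp_all add: simple_graph_def)
  have "\<Union>?C = ?S" using assms by (auto simp: simple_graph_def nbhd_def)
  moreover have "2 * card ?C = card (\<Union>?C)"
  proof (rule card_partition)
    show "finite ?C" using fin by simp
    show "finite (\<Union>?C)" using fin \<open>\<Union>?C = ?S\<close> by simp
    show "card c = 2" if "c \<in> ?C" for c
    proof -
      obtain a b where c: "c = {(a, b), (b, a)}" "b \<in> nbhd V E a"
        using \<open>c \<in> ?C\<close> by auto
      then have "a \<noteq> b" using assms by (auto simp: simple_graph_def nbhd_def)
      then show ?thesis using c(1) by simp
    qed
    show "c1 \<inter> c2 = {}" if "c1 \<in> ?C" "c2 \<in> ?C" "c1 \<noteq> c2" for c1 c2
      using that by auto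
  qed
  ultimately have "card ?S = 2 * card ?C" by simp
  moreover have "card ?S = (\<Sum>v\<in>V. card (nbhd V E v))"
    using assms simple_graph_finite_nbhd[OF assms] by (intro card_SigmaI) (simp_all add: simple_graph_def)
  ultimately show ?thesis by simp
qed

lemma less_7_iff: "(i::nat) < 7 \<longleftrightarrow> i \<in> {0,1,2,3,4,5,6}" by auto
lemma all_less_7: "(\<forall>i<7::nat. P i) \<longleftrightarrow> P 0 \<and> P 1 \<and> P 2 \<and> P 3 \<and> P 4 \<and> P 5 \<and> P 6"
  unfolding less_7_iff by blast

lemma ex_less_7: "(\<exists>i<7::nat. P i) \<longleftrightarrow> P 0 \<or> P 1 \<or> P 2 \<or> P 3 \<or> P 4 \<or> P 5 \<or> P 6"
  unfolding less_7_iff by blast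

lemma fano_inc_two_points:
  assumes "i < 7" "j < 7" "i \<noteq> j"
  obtains k where "k < 7" "fano_inc i k" "fano_inc j k"
proof -
  have "\<forall>i<7. \<forall>j<7. i \<noteq> j \<longrightarrow> (\<exists>k<7. fano_inc i k \<and> fano_inc j k)"
    unfolding all_less_7 ex_less_7 fano_inc_def by simp
  then show ?thesis using assms that by blast
qed

lemma fano_inc_lines_differ:
  assumes "k < 7" "k' < 7" "\<And>i. i < 7 \<Longrightarrow> fano_inc i k \<longleftrightarrow> fano_inc i k'"
  shows "k = k'"
proof -
  have "\<forall>k<7. \<forall>k'<7. (\<forall>i<7. fano_inc i k \<longleftrightarrow> fano_inc i k') \<longrightarrow> k = k'"
    unfolding all_less_7 fano_inc_def by simp
  then show ?thesis using assms by blast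
qed

locale fano_plane =
  fixes P L :: "'a set" and inc :: "'a \<Rightarrow> 'a \<Rightarrow> bool"
  assumes card_points: "card P = 7"
    and card_line: "l \<in> L \<Longrightarrow> card {p\<in>P. inc p l} = 3"
    and line_exists: "p \<in> P \<Longrightarrow> q \<in> P \<Longrightarrow> p \<noteq> q \<Longrightarrow> \<exists>l\<in>L. inc p l \<and> inc q l"
    and line_unique: "p \<in> P \<Longrightarrow> q \<in> P \<Longrightarrow> p \<noteq> q \<Longrightarrow> l \<in> L \<Longrightarrow> l' \<in> L \<Longrightarrow>
       inc p l \<Longrightarrow> inc q l \<Longrightarrow> inc p l' \<Longrightarrow> inc q l' \<Longrightarrow> l = l'"
begin

definition points_on :: "'a \<Rightarrow> 'a set" where
  "points_on l = {p\<in>P. inc p l}"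

lemma finite_points: "finite P"
  using card_points card.infinite by fastforce

lemma points_on_unique:
  "l \<in> L \<Longrightarrow> l' \<in> L \<Longrightarrow> {a, b} \<subseteq> points_on l \<Longrightarrow> {a, b} \<subseteq> points_on l' \<Longrightarrow> a \<noteq> b
   \<Longrightarrow> points_on l = points_on l'"
  using line_unique unfolding points_on_def by auto

lemma lines_meet_once:
  assumes "l \<in> L" "l' \<in> L" "a \<in> points_on l" "a \<in> points_on l'"
    and "b \<in> points_on l" "b \<notin> points_on l'" "c \<in> points_on l" "c \<noteq> a"
  shows "c \<notin> points_on l'"
proof
  assume "c \<in> points_on l'"
  then have "points_on l = points_on l'"
    using points_on_unique[OF assms(1,2), of a c] assms(3,4,7,8) by blast
  then show False using assms(5,6) by blast
qed

lemma line_through: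
  assumes "p \<in> P" "q \<in> P" "p \<noteq> q"
  obtains l c where "l \<in> L" "points_on l = {p, q, c}" "c \<noteq> p" "c \<noteq> q"
proof -
  obtain l where l: "l \<in> L" "inc p l" "inc q l"
    using line_exists[OF assms] by blast
  have pq: "{p, q} \<subseteq> points_on l"
    using l assms unfolding points_on_def by auto
  have "card (points_on l - {p, q}) = 1"
    using card_line[OF l(1)] pq assms(3) finite_points
    by (simp add: points_on_def card_Diff_subset)
  then obtain c where "points_on l - {p, q} = {c}"
    using card_1_singletonE by blast
  with pq that l(1) show ?thesis by blast
qed

text \<open>It already fixes the labels of the model in which line k
  is {k, k + 1, k + 3} mod 7.\<close>
lemma fano_plane_frame:
  obtains a0 a1 a2 a3 a4 a5 a6 m0 m1 m2 m6
  where "distinct [a0, a1, a2, a3, a4, a5, a6]" "P = {a0, a1, a2, a3, a4, a5, a6}"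
    and "m0 \<in> L" "points_on m0 = {a0, a1, a3}" "m1 \<in> L" "points_on m1 = {a1, a2, a4}"
    and "m2 \<in> L" "points_on m2 = {a2, a3, a5}" "m6 \<in> L" "points_on m6 = {a0, a2, a6}"
proof -
  obtain a0 a1 where a01: "a0 \<in> P" "a1 \<in> P" "a0 \<noteq> a1"
    using card_le_Suc0_iff_eq[OF finite_points] card_points by auto
  obtain m0 a3 where m0: "m0 \<in> L" "points_on m0 = {a0, a1, a3}" "a3 \<noteq> a0" "a3 \<noteq> a1"
    using line_through[OF a01] .
  have "card (P - points_on m0) = 4"
    using card_line[OF m0(1)] card_points finite_points
    by (simp add: points_on_def card_Diff_subset)
  then obtain a2 where a2: "a2 \<in> P" "a2 \<notin> points_on m0"
    by (metis Diff_iff card_0_eq finite_Diff finite_points zero_neq_numeral ex_in_conv)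
  have a3: "a3 \<in> P" using m0(2) unfolding points_on_def by blast
  obtain m1 a4 where m1: "m1 \<in> L" "points_on m1 = {a1, a2, a4}" "a4 \<noteq> a1" "a4 \<noteq> a2"
    using line_through[of a1 a2] a01 a2 m0(2) by auto
  obtain m2 a5 where m2: "m2 \<in> L" "points_on m2 = {a2, a3, a5}" "a5 \<noteq> a2" "a5 \<noteq> a3"
    using line_through[of a2 a3] a3 a2 m0(2) by auto
  obtain m6 a6 where m6: "m6 \<in> L" "points_on m6 = {a0, a2, a6}" "a6 \<noteq> a0" "a6 \<noteq> a2"
    using line_through[of a0 a2] a01 a2 m0(2) by auto
  have d2: "a2 \<noteq> a0" "a2 \<noteq> a1" "a2 \<noteq> a3" using a2 m0(2) by auto
  have "a4 \<notin> points_on m0"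
    by (rule lines_meet_once[OF m1(1) m0(1), of a1 a2]) (use m0 m1 a2 in auto)
  then have d4: "a4 \<noteq> a0" "a4 \<noteq> a3" using m0(2) by auto
  have "a5 \<notin> points_on m0"
    by (rule lines_meet_once[OF m2(1) m0(1), of a3 a2]) (use m0 m2 a2 in auto)
  then have d5: "a5 \<noteq> a0" "a5 \<noteq> a1" using m0(2) by auto
  have "a5 \<notin> points_on m1"
    by (rule lines_meet_once[OF m2(1) m1(1), of a2 a3]) (use m1 m2 m0 d2 d4 in auto)
  then have d54: "a5 \<noteq> a4" using m1(2) by auto
  have "a6 \<notin> points_on m0"
    by (rule lines_meet_once[OF m6(1) m0(1), of a0 a2]) (use m0 m6 a2 in auto)
  then have d6: "a6 \<noteq> a1" "a6 \<noteq> a3" using m0(2) by auto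
  have "a6 \<notin> points_on m1"
    by (rule lines_meet_once[OF m6(1) m1(1), of a2 a0]) (use m1 m6 a01 d2 d4 in auto)
  then have d64: "a6 \<noteq> a4" using m1(2) by auto
  have "a6 \<notin> points_on m2"
    by (rule lines_meet_once[OF m6(1) m2(1), of a2 a0]) (use m2 m6 m0 d2 d5 in auto)
  then have d65: "a6 \<noteq> a5" using m2(2) by auto
  have dist: "distinct [a0, a1, a2, a3, a4, a5, a6]"
    using a01(3) m0(3,4) m1(3,4) m2(3,4) m6(3,4) d2 d4 d5 d54 d6 d64 d65 by (simp add: eq_commute)
  have P: "P = {a0, a1, a2, a3, a4, a5, a6}"
  proof -
    have "{a0, a1, a2, a3, a4, a5, a6} \<subseteq> P"
      using a01 a2 m0 m1 m2 m6 unfolding points_on_def by blast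
    moreover have "card {a0, a1, a2, a3, a4, a5, a6} = 7"
      using distinct_card[OF dist] by simp
    ultimately show ?thesis
      using card_subset_eq[OF finite_points] card_points by metis
  qed
  show ?thesis by (rule that[OF dist P m0(1,2) m1(1,2) m2(1,2) m6(1,2)])
qed

context
  fixes a0 a1 a2 a3 a4 a5 a6 m0 m1 m2 m6
  assumes dist: "distinct [a0, a1, a2, a3, a4, a5, a6]"
    and P_eq: "P = {a0, a1, a2, a3, a4, a5, a6}"
    and m0: "m0 \<in> L" "points_on m0 = {a0, a1, a3}" and m1: "m1 \<in> L" "points_on m1 = {a1, a2, a4}"
    and m2: "m2 \<in> L" "points_on m2 = {a2, a3, a5}" and m6: "m6 \<in> L" "points_on m6 = {a0, a2, a6}"
begin

lemma frame_line_3: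
  obtains m3 where "m3 \<in> L" "points_on m3 = {a3, a4, a6}"
proof -
  note dist' = dist[simplified]
  obtain m3 q where m3: "m3 \<in> L" "points_on m3 = {a3, a4, q}" "q \<noteq> a3" "q \<noteq> a4"
    using line_through[of a3 a4] P_eq dist' by auto
  have "q \<in> P" using m3(2) unfolding points_on_def by blast
  moreover have "q \<notin> points_on m0"
    by (rule lines_meet_once[OF m3(1) m0(1), of a3 a4]) (use m0 m3 dist' in auto)
  moreover have "q \<notin> points_on m1"
    by (rule lines_meet_once[OF m3(1) m1(1), of a4 a3]) (use m1 m3 dist' in auto)
  moreover have "q \<notin> points_on m2"
    by (rule lines_meet_once[OF m3(1) m2(1), of a3 a4]) (use m2 m3 dist' in auto)
  ultimately have "q = a6" using P_eq m0(2) m1(2) m2(2) by auto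
  with m3 that show ?thesis by auto
qed

lemma frame_line_4:
  obtains m4 where "m4 \<in> L" "points_on m4 = {a4, a5, a0}"
proof -
  note dist' = dist[simplified]
  obtain m3 where m3: "m3 \<in> L" "points_on m3 = {a3, a4, a6}" by (rule frame_line_3)
  obtain m4 q where m4: "m4 \<in> L" "points_on m4 = {a4, a5, q}" "q \<noteq> a4" "q \<noteq> a5"
    using line_through[of a4 a5] P_eq dist' by auto
  have "q \<in> P" using m4(2) unfolding points_on_def by blast
  moreover have "q \<notin> points_on m1"
    by (rule lines_meet_once[OF m4(1) m1(1), of a4 a5]) (use m1 m4 dist' in auto)
  moreover have "q \<notin> points_on m2"
    by (rule lines_meet_once[OF m4(1) m2(1), of a5 a4]) (use m2 m4 dist' in auto)
  moreover have "q \<notin> points_on m3"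
    by (rule lines_meet_once[OF m4(1) m3(1), of a4 a5]) (use m3 m4 dist' in auto)
  ultimately have "q = a0" using P_eq m1(2) m2(2) m3(2) by auto
  with m4 that show ?thesis by auto
qed

lemma frame_line_5:
  obtains m5 where "m5 \<in> L" "points_on m5 = {a5, a6, a1}"
proof -
  note dist' = dist[simplified]
  obtain m3 where m3: "m3 \<in> L" "points_on m3 = {a3, a4, a6}" by (rule frame_line_3)
  obtain m4 where m4: "m4 \<in> L" "points_on m4 = {a4, a5, a0}" by (rule frame_line_4)
  obtain m5 q where m5: "m5 \<in> L" "points_on m5 = {a5, a6, q}" "q \<noteq> a5" "q \<noteq> a6"
    using line_through[of a5 a6] P_eq dist' by auto
  have "q \<in> P" using m5(2) unfolding points_on_def by blast
  moreover have "q \<notin> points_on m2"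
    by (rule lines_meet_once[OF m5(1) m2(1), of a5 a6]) (use m2 m5 dist' in auto)
  moreover have "q \<notin> points_on m3"
    by (rule lines_meet_once[OF m5(1) m3(1), of a6 a5]) (use m3 m5 dist' in auto)
  moreover have "q \<notin> points_on m4"
    by (rule lines_meet_once[OF m5(1) m4(1), of a5 a6]) (use m4 m5 dist' in auto)
  moreover have "q \<notin> points_on m6"
    by (rule lines_meet_once[OF m5(1) m6(1), of a6 a5]) (use m6 m5 dist' in auto)
  ultimately have "q = a1" using P_eq m2(2) m3(2) m4(2) m6(2) by auto
  with m5 that show ?thesis by auto
qed

lemma frame_labelling:
  "\<exists>ls. length ls = 7 \<and> set ls \<subseteq> L \<and>
     (\<forall>i<7. \<forall>k<7. [a0, a1, a2, a3, a4, a5, a6] ! i \<in> points_on (ls ! k) \<longleftrightarrow> fano_inc i k)"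
proof -
  obtain m3 where m3: "m3 \<in> L" "points_on m3 = {a3, a4, a6}" by (rule frame_line_3)
  obtain m4 where m4: "m4 \<in> L" "points_on m4 = {a4, a5, a0}" by (rule frame_line_4)
  obtain m5 where m5: "m5 \<in> L" "points_on m5 = {a5, a6, a1}" by (rule frame_line_5)
  let ?ls = "[m0, m1, m2, m3, m4, m5, m6]"
  have "\<forall>i<7. \<forall>k<7. [a0, a1, a2, a3, a4, a5, a6] ! i \<in> points_on (?ls ! k) \<longleftrightarrow> fano_inc i k"
    unfolding all_less_7 using m0(2) m1(2) m2(2) m3(2) m4(2) m5(2) m6(2) dist[simplified]
    by (simp add: fano_inc_def eq_commute)
  moreover have "set ?ls \<subseteq> L" using m0 m1 m2 m3 m4 m5 m6 by simp
  ultimately show ?thesis by (intro exI[of _ ?ls]) simp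
qed

end

lemma fano_plane_labelling:
  "\<exists>ps ls. length ps = 7 \<and> distinct ps \<and> set ps = P \<and> length ls = 7 \<and> set ls \<subseteq> L \<and>
     (\<forall>i<7. \<forall>k<7. ps ! i \<in> points_on (ls ! k) \<longleftrightarrow> fano_inc i k)"
proof -
  obtain a0 a1 a2 a3 a4 a5 a6 m0 m1 m2 m6
    where frame: "distinct [a0, a1, a2, a3, a4, a5, a6]" "P = {a0, a1, a2, a3, a4, a5, a6}"
      "m0 \<in> L" "points_on m0 = {a0, a1, a3}" "m1 \<in> L" "points_on m1 = {a1, a2, a4}"
      "m2 \<in> L" "points_on m2 = {a2, a3, a5}" "m6 \<in> L" "points_on m6 = {a0, a2, a6}"
    by (rule fano_plane_frame)
  moreover obtain ls where "length ls = 7" "set ls \<subseteq> L"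
    "\<forall>i<7. \<forall>k<7. [a0, a1, a2, a3, a4, a5, a6] ! i \<in> points_on (ls ! k) \<longleftrightarrow> fano_inc i k"
    using frame_labelling[OF frame] by blast
  ultimately show ?thesis by (intro exI[of _ "[a0, a1, a2, a3, a4, a5, a6]"] exI[of _ ls]) simp
qed

lemma fano_plane_coordinates:
  obtains ps ls where "length ps = 7" "distinct ps" "set ps = P"
    and "length ls = 7" "distinct ls" "set ls = L"
    and "\<And>i k. i < 7 \<Longrightarrow> k < 7 \<Longrightarrow> inc (ps ! i) (ls ! k) \<longleftrightarrow> fano_inc i k"
proof -
  obtain ps ls where ps: "length ps = 7" "distinct ps" "set ps = P"
    and ls: "length ls = 7" "set ls \<subseteq> L"
    and on: "\<forall>i<7. \<forall>k<7. ps ! i \<in> points_on (ls ! k) \<longleftrightarrow> fano_inc i k"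
    using fano_plane_labelling by blast
  have ps_P: "ps ! i \<in> P" if "i < 7" for i
    using that ps nth_mem by metis
  have inc: "inc (ps ! i) (ls ! k) \<longleftrightarrow> fano_inc i k" if "i < 7" "k < 7" for i k
    using on ps_P that unfolding points_on_def by auto
  have "distinct ls"
    unfolding distinct_conv_nth
  proof (intro allI impI notI)
    fix k k' assume k: "k < length ls" "k' < length ls" "k \<noteq> k'" "ls ! k = ls ! k'"
    have "fano_inc i k \<longleftrightarrow> fano_inc i k'" if "i < 7" for i
      using inc[OF that, of k] inc[OF that, of k'] k ls(1) by simp
    then show False
      using fano_inc_lines_differ k ls(1) by simp
  qed
  moreover have "L \<subseteq> set ls"
  proof
    fix l assume l: "l \<in> L"
    have "\<not> card (points_on l) \<le> Suc 0"
      using card_line[OF l] by (simp add: points_on_def)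
    moreover have "finite (points_on l)"
      using finite_points by (simp add: points_on_def)
    ultimately obtain p q where pq: "p \<in> points_on l" "q \<in> points_on l" "p \<noteq> q"
      using card_le_Suc0_iff_eq by blast
    then have "p \<in> set ps" "q \<in> set ps"
      using ps(3) by (auto simp: points_on_def)
    then obtain i j where ij: "i < 7" "j < 7" "p = ps ! i" "q = ps ! j"
      using ps(1) by (auto simp: in_set_conv_nth)
    then obtain k where k: "k < 7" "fano_inc i k" "fano_inc j k"
      using fano_inc_two_points pq(3) by metis
    have "ls ! k \<in> L" using ls k(1) by (simp add: subsetD)
    moreover have "inc p (ls ! k)" "inc q (ls ! k)" using inc ij k by simp_all
    ultimately have "l = ls ! k"
      using line_unique[of p q l "ls ! k"] l pq unfolding points_on_def by blast
    then show "l \<in> set ls" using k(1) ls(1) by simp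
  qed
  ultimately show ?thesis
    using that ps ls inc by blast
qed
end

lemma connected_closed_eq:
  assumes "connected_graph V E" "S \<subseteq> V" "s \<in> S" "\<And>u v. u \<in> S \<Longrightarrow> E u v \<Longrightarrow> v \<in> S"
  shows "S = V"
proof -
  have "v \<in> S" if "v \<in> V" for v
  proof -
    have "(s, v) \<in> {(x, y). E x y}\<^sup>*"
      using assms(1-3) that unfolding connected_graph_def by blast
    then show ?thesis
      by (induction rule: rtrancl_induct) (use assms(3,4) in auto)
  qed
  then show ?thesis using assms(2) by blast
qed

locale cubic_graph =
  fixes V :: "'a set" and E :: "'a \<Rightarrow> 'a \<Rightarrow> bool"
  assumes simple: "simple_graph V E" and cubic: "cubic V E"
begin

lemma finite_V: "finite V"
  using simple by (simp add: simple_graph_def)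

lemma edge_in_V: "E u v \<Longrightarrow> u \<in> V" "E u v \<Longrightarrow> v \<in> V"
  using simple by (simp_all add: simple_graph_def)

lemma edge_sym: "E u v \<Longrightarrow> E v u"
  using simple by (simp add: simple_graph_def)

lemma edge_sym_iff: "E u v \<longleftrightarrow> E v u"
  using edge_sym by blast

lemma in_nbhd_iff: "u \<in> nbhd V E v \<longleftrightarrow> E v u"
  using edge_in_V by (auto simp: nbhd_def)

lemma card_nbhd: "v \<in> V \<Longrightarrow> card (nbhd V E v) = 3"
  using cubic by (simp add: cubic_def)

lemma finite_nbhd: "finite (nbhd V E v)"
  using simple_graph_finite_nbhd[OF simple] .

lemma even_card_V: "even (card V)"
proof -
  have "(\<Sum>v\<in>V. card (nbhd V E v)) = 3 * card V" using card_nbhd by simp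
  then show ?thesis using even_sum_card_nbhd[OF simple] by simp
qed

lemma common_nbr_iff: "common_nbr V E u v \<longleftrightarrow> u \<noteq> v \<and> (\<exists>x. E u x \<and> E x v)"
  using edge_in_V edge_sym by (auto simp: common_nbr_def in_nbhd_iff)

lemma common_nbr_sym: "common_nbr V E u v \<Longrightarrow> common_nbr V E v u"
  by (auto simp: common_nbr_def)

lemma common_nbr_irrefl: "\<not> common_nbr V E u u"
  by (simp add: common_nbr_def)

lemma common_nbr_in_V: "common_nbr V E u v \<Longrightarrow> v \<in> V"
  by (simp add: common_nbr_def)

text \<open>The vertices sharing a neighbour with u are the other neighbours of its three neighbours.\<close>
lemma card_common_nbr_le:
  assumes u: "u \<in> V"
  shows "card {v\<in>V. common_nbr V E u v} \<le> 6"
proof -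
  have sub: "{v\<in>V. common_nbr V E u v} \<subseteq> (\<Union>x\<in>nbhd V E u. nbhd V E x - {u})"
    by (auto simp: common_nbr_iff in_nbhd_iff)
  have "card (\<Union>x\<in>nbhd V E u. nbhd V E x - {u}) \<le> (\<Sum>x\<in>nbhd V E u. card (nbhd V E x - {u}))"
    by (rule card_UN_le) (rule finite_nbhd)
  also have "\<dots> = (\<Sum>x\<in>nbhd V E u. 2)"
  proof (rule sum.cong)
    fix x assume "x \<in> nbhd V E u"
    then have "u \<in> nbhd V E x" "x \<in> V" using edge_sym edge_in_V by (auto simp: in_nbhd_iff)
    then show "card (nbhd V E x - {u}) = 2" using card_nbhd finite_nbhd by simp
  qed simp
  also have "\<dots> = 6" using card_nbhd[OF u] by simp
  finally show ?thesis
    using card_mono[OF _ sub] finite_nbhd by (meson finite_Diff finite_UN le_trans)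
qed

lemma common_nbr_triangle:
  assumes "common_nbr V E u v"
  obtains t where "common_nbr V E u t" "common_nbr V E v t"
proof -
  obtain x where x: "E u x" "E x v" "u \<noteq> v"
    using assms by (auto simp: common_nbr_iff)
  have "{u, v} \<subseteq> nbhd V E x" using x edge_sym by (auto simp: in_nbhd_iff)
  moreover have "card (nbhd V E x) = 3" using card_nbhd edge_in_V x(1) by blast
  ultimately have "\<not> nbhd V E x \<subseteq> {u, v}"
    using card_mono[of "{u, v}" "nbhd V E x"] x(3) by auto
  then obtain t where "t \<in> nbhd V E x" "t \<noteq> u" "t \<noteq> v" by blast
  then show ?thesis
    using that[of t] x edge_sym[OF x(2)] by (auto simp: common_nbr_iff in_nbhd_iff)
qed

lemma card_common_nbr_le_5:
  assumes p: "p \<in> V" and xy: "x \<noteq> y" "E p x" "E p y" "E q x" "E q y" and "q \<noteq> p"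
  shows "card {v\<in>V. common_nbr V E p v} \<le> 5"
proof -
  obtain w where N: "nbhd V E p = {x, y, w}"
  proof -
    have "{x, y} \<subseteq> nbhd V E p" using xy by (auto simp: in_nbhd_iff)
    then have "card (nbhd V E p - {x, y}) = 1"
      using card_nbhd[OF p] xy(1) finite_nbhd by (simp add: card_Diff_subset)
    then obtain w where "nbhd V E p - {x, y} = {w}" using card_1_singletonE by blast
    then show ?thesis using that \<open>{x, y} \<subseteq> nbhd V E p\<close> by blast
  qed
  let ?A = "nbhd V E x - {p}" and ?B = "nbhd V E y - {p}" and ?W = "nbhd V E w - {p}"
  have "E p w" using N by (auto simp: in_nbhd_iff)
  have two: "card (nbhd V E z - {p}) = 2" if "E p z" for z
  proof -
    have "p \<in> nbhd V E z" "z \<in> V" using that edge_sym edge_in_V by (auto simp: in_nbhd_iff)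
    then show ?thesis using card_nbhd finite_nbhd by simp
  qed
  have "q \<in> ?A \<inter> ?B" using xy edge_sym \<open>q \<noteq> p\<close> by (auto simp: in_nbhd_iff)
  then have "card (?A \<inter> ?B) \<ge> 1"
    using finite_nbhd by (metis card_0_eq empty_iff finite_Diff finite_Int less_one not_le)
  moreover have "card (?A \<union> ?B) + card (?A \<inter> ?B) = card ?A + card ?B"
    using card_Un_Int[of ?A ?B] finite_nbhd by simp
  ultimately have "card (?A \<union> ?B) \<le> 3" using two xy by simp
  moreover have "{v\<in>V. common_nbr V E p v} \<subseteq> ?A \<union> ?B \<union> ?W"
    using N by (auto simp: common_nbr_iff in_nbhd_iff)
  then have "card {v\<in>V. common_nbr V E p v} \<le> card (?A \<union> ?B) + card ?W"
    using card_mono[of "?A \<union> ?B \<union> ?W"] card_Un_le[of "?A \<union> ?B" ?W] finite_nbhd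
    by (meson finite_Diff finite_UnI le_trans)
  ultimately show ?thesis using two[OF \<open>E p w\<close>] by simp
qed

end

lemma iso_heawood_of_list:
  assumes gs: "distinct gs" "length gs = 14" "set gs = V"
    and adj: "\<And>i j. i < 14 \<Longrightarrow> j < 14 \<Longrightarrow> E (gs ! i) (gs ! j) \<longleftrightarrow> heawood_adj i j"
  shows "iso_heawood V E"
proof -
  have bij: "bij_betw ((!) gs) {0..<14} V"
    using bij_betw_nth[OF gs(1)] gs(2,3) by (simp add: lessThan_atLeast0)
  define h where "h = inv_into {0..<14} ((!) gs)"
  have "bij_betw h V {0..<14}"
    unfolding h_def by (rule bij_betw_inv_into[OF bij])
  moreover have "gs ! h u = u" "h u < 14" if "u \<in> V" for u
    using that bij f_inv_into_f[of u "(!) gs"] inv_into_into[of u "(!) gs" "{0..<14}"]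
    unfolding h_def bij_betw_def by auto
  ultimately show ?thesis
    unfolding iso_heawood_def using adj by metis
qed

context cubic_graph
begin

context
  fixes C :: "'a set"
  assumes connected: "connected_graph V E"
    and C_sub: "C \<subseteq> V" and card_C: "card C = 7"
    and C_closed: "\<And>u v. u \<in> C \<Longrightarrow> common_nbr V E u v \<Longrightarrow> v \<in> C"
    and C_complete: "\<And>u v. u \<in> C \<Longrightarrow> v \<in> C \<Longrightarrow> u \<noteq> v \<Longrightarrow> common_nbr V E u v"
begin

definition lines :: "'a set" where
  "lines = {x\<in>V. \<exists>c\<in>C. E c x}"

lemma finite_C: "finite C"
  using C_sub finite_V finite_subset by blast

lemma common_nbr_set_eq:
  assumes "p \<in> C"
  shows "{v\<in>V. common_nbr V E p v} = C - {p}"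
proof (intro equalityI subsetI)
  fix v assume "v \<in> {v\<in>V. common_nbr V E p v}"
  then have "common_nbr V E p v" by simp
  then show "v \<in> C - {p}"
    using C_closed[OF assms] common_nbr_irrefl by auto
next
  fix v assume "v \<in> C - {p}"
  then show "v \<in> {v\<in>V. common_nbr V E p v}"
    using C_complete[OF assms] C_sub by auto
qed

lemma unique_common_nbr:
  assumes "p \<in> C" "q \<in> C" "p \<noteq> q" "E p x" "E q x" "E p y" "E q y"
  shows "x = y"
proof (rule ccontr)
  assume "x \<noteq> y"
  have "card {v\<in>V. common_nbr V E p v} \<le> 5"
    by (rule card_common_nbr_le_5[of p x y q]) (use assms C_sub \<open>x \<noteq> y\<close> in auto)
  moreover have "card (C - {p}) = 6" using card_C assms(1) finite_C by simp
  ultimately show False using common_nbr_set_eq[OF assms(1)] by simp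
qed

lemma nbhd_line_subset: "x \<in> lines \<Longrightarrow> nbhd V E x \<subseteq> C"
proof
  fix x z assume "x \<in> lines" "z \<in> nbhd V E x"
  then obtain c where c: "c \<in> C" "E c x" "E x z" by (auto simp: lines_def in_nbhd_iff)
  show "z \<in> C"
  proof (cases "z = c")
    case False
    then have "common_nbr V E c z" using c by (simp add: common_nbr_iff; blast)
    then show ?thesis using C_closed c(1) by blast
  qed (use c in simp)
qed

text \<open>An edge inside C would make C closed under adjacency, hence equal to V;
  but a cubic graph has an even number of vertices.\<close>
lemma C_lines_disjoint: "C \<inter> lines = {}"
proof (rule ccontr)
  assume "C \<inter> lines \<noteq> {}"
  then obtain c w where cw: "c \<in> C" "w \<in> C" "E w c" by (auto simp: lines_def)
  define S where "S = {u\<in>C. \<exists>w\<in>C. E u w}"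
  have S_closed: "z \<in> S" if u: "u \<in> S" "E u z" for u z
  proof -
    obtain w where w: "u \<in> C" "w \<in> C" "E u w" using u by (auto simp: S_def)
    have "z \<in> C"
    proof (cases "z = w")
      case False
      then have "common_nbr V E w z" using w(3) u(2) edge_sym[OF w(3)] by (auto simp: common_nbr_iff)
      then show ?thesis using C_closed w(2) by blast
    qed (use w in simp)
    then show ?thesis using w(1) edge_sym[OF u(2)] by (auto simp: S_def)
  qed
  have "c \<in> S" using cw(1,2) edge_sym[OF cw(3)] by (auto simp: S_def)
  have "S \<subseteq> C" by (auto simp: S_def)
  then have "S = V"
    using connected_closed_eq[OF connected _ \<open>c \<in> S\<close> S_closed] C_sub by simp
  then have "V = C" using \<open>S \<subseteq> C\<close> C_sub by blast
  then show False using even_card_V card_C by simp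
qed

lemma V_eq: "V = C \<union> lines"
proof -
  have "C \<noteq> {}" using card_C by auto
  then obtain c where c: "c \<in> C" by blast
  have closed: "v \<in> C \<union> lines" if "u \<in> C \<union> lines" "E u v" for u v
  proof (cases "u \<in> C")
    case True
    then show ?thesis using that(2) edge_in_V(2)[OF that(2)] by (auto simp: lines_def)
  next
    case False
    then have "u \<in> lines" using that(1) by blast
    moreover have "v \<in> nbhd V E u" using that(2) by (simp add: in_nbhd_iff)
    ultimately show ?thesis using nbhd_line_subset by blast
  qed
  have "C \<union> lines \<subseteq> V" using C_sub by (auto simp: lines_def)
  then show ?thesis using connected_closed_eq[OF connected _ UnI1[OF c] closed] by simp
qed

lemma fano_plane: "fano_plane C lines E"
proof
  show "card C = 7" by (rule card_C)
next
  fix l assume l: "l \<in> lines"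
  have "{p\<in>C. E p l} = nbhd V E l"
    using nbhd_line_subset[OF l] C_sub by (auto simp: in_nbhd_iff edge_sym_iff)
  then show "card {p\<in>C. E p l} = 3"
    using card_nbhd l by (simp add: lines_def)
next
  fix p q assume "p \<in> C" "q \<in> C" "p \<noteq> q"
  then obtain x where "E p x" "E x q" using C_complete[of p q] by (auto simp: common_nbr_iff)
  then show "\<exists>l\<in>lines. E p l \<and> E q l"
    using \<open>p \<in> C\<close> edge_sym[of x q] edge_in_V(2)[of p x] by (auto simp: lines_def)
next
  fix p q l l' assume "p \<in> C" "q \<in> C" "p \<noteq> q" "E p l" "E q l" "E p l'" "E q l'"
  then show "l = l'" using unique_common_nbr by blast
qed

theorem iso_heawood_if_complete:  "iso_heawood V E"
proof -
  interpret fano_plane C lines E by (rule fano_plane)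
  obtain ps ls where ps: "length ps = 7" "distinct ps" "set ps = C"
    and ls: "length ls = 7" "distinct ls" "set ls = lines"
    and inc: "\<And>i k. i < 7 \<Longrightarrow> k < 7 \<Longrightarrow> E (ps ! i) (ls ! k) \<longleftrightarrow> fano_inc i k"
    by (rule fano_plane_coordinates) blast
  have no_edge_C: "\<not> E a b" if "a \<in> C" "b \<in> C" for a b
    using that C_lines_disjoint edge_in_V by (auto simp: lines_def)
  have no_edge_lines: "\<not> E a b" if "a \<in> lines" "b \<in> lines" for a b
  proof
    assume "E a b"
    then have "b \<in> C" using nbhd_line_subset[OF that(1)] by (auto simp: in_nbhd_iff)
    then show False using that(2) C_lines_disjoint by blast
  qed
  let ?gs = "ps @ ls"
  show ?thesis
  proof (rule iso_heawood_of_list)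
    show "distinct ?gs" using ps ls C_lines_disjoint by auto
    show "length ?gs = 14" using ps ls by simp
    show "set ?gs = V" using ps ls V_eq by simp
  next
    fix i j :: nat assume ij: "i < 14" "j < 14"
    have gs: "?gs ! n = (if n < 7 then ps ! n else ls ! (n - 7))" for n
      using ps(1) by (simp add: nth_append)
    have C: "ps ! n \<in> C" if "n < 7" for n using that ps(1,3) nth_mem[of n ps] by simp
    have L: "ls ! n \<in> lines" if "n < 7" for n using that ls(1,3) nth_mem[of n ls] by simp
    consider "i < 7" "j < 7" | "i < 7" "j \<ge> 7" | "i \<ge> 7" "j < 7" | "i \<ge> 7" "j \<ge> 7"
      by linarith
    then show "E (?gs ! i) (?gs ! j) \<longleftrightarrow> heawood_adj i j"
    proof cases
      case 1
      then show ?thesis using no_edge_C[OF C C] by (simp add: gs heawood_adj_def)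
    next
      case 2
      then show ?thesis using inc[of i "j - 7"] ij by (auto simp: gs heawood_adj_def)
    next
      case 3
      then show ?thesis
        using inc[of j "i - 7"] ij edge_sym_iff[of "ls ! (i - 7)"] by (auto simp: gs heawood_adj_def)
    next
      case 4
      then show ?thesis using no_edge_lines[OF L L] ij by (simp add: gs heawood_adj_def)
    qed
  qed
qed

end

end

lemma (in cubic_graph) triangle_covered_component:
  assumes C: "C \<subseteq> V"
    and closed: "\<And>u v. u \<in> C \<Longrightarrow> common_nbr V E u v \<Longrightarrow> v \<in> C"
    and conn: "\<And>u v. u \<in> C \<Longrightarrow> v \<in> C \<Longrightarrow>
      (u, v) \<in> {(x, y). x \<in> C \<and> y \<in> C \<and> common_nbr V E x y}\<^sup>*"
  shows "triangle_covered_graph C (common_nbr V E) 6"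
proof
  show "finite C" using C finite_V by (rule finite_subset)
next
  show "card {v\<in>C. common_nbr V E u v} \<le> 6" if "u \<in> C" for u
  proof -
    have "card {v\<in>C. common_nbr V E u v} \<le> card {v\<in>V. common_nbr V E u v}"
      using C finite_V by (intro card_mono) auto
    then show ?thesis using card_common_nbr_le[OF subsetD[OF C that]] by linarith
  qed
next
  show "\<exists>t\<in>C. common_nbr V E u t \<and> common_nbr V E v t"
    if u: "u \<in> C" and "v \<in> C" and uv: "common_nbr V E u v" for u v
  proof -
    obtain t where "common_nbr V E u t" "common_nbr V E v t"
      by (rule common_nbr_triangle[OF uv])
    then show ?thesis using closed[OF u] by blast
  qed
qed (use common_nbr_sym common_nbr_irrefl conn in blast)+

lemma (in cubic_graph) large_open_packing:
  assumes connected: "connected_graph V E" and not_heawood: "\<not> iso_heawood V E"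
  shows "\<exists>I. open_packing V E I \<and> card V \<le> 6 * card I"
proof -
  have "\<exists>I\<subseteq>V. (\<forall>a\<in>I. \<forall>b\<in>I. \<not> common_nbr V E a b) \<and> card V \<le> 6 * card I"
  proof (rule independent_set_by_components[OF finite_V])
    fix C assume C: "C \<subseteq> V" "C \<noteq> {}"
      and closed: "\<And>u v. u \<in> C \<Longrightarrow> common_nbr V E u v \<Longrightarrow> v \<in> C"
      and conn: "\<And>u v. u \<in> C \<Longrightarrow> v \<in> C \<Longrightarrow>
        (u, v) \<in> {(x, y). x \<in> C \<and> y \<in> C \<and> common_nbr V E x y}\<^sup>*"
    interpret T: triangle_covered_graph C "common_nbr V E" 6
      using triangle_covered_component[OF C(1) closed conn] .
    have "\<not> (card C = 7 \<and> (\<forall>u\<in>C. card (T.nbr u) = 6))"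
    proof
      assume complete: "card C = 7 \<and> (\<forall>u\<in>C. card (T.nbr u) = 6)"
      have nbr_eq: "T.nbr u = C - {u}" if "u \<in> C" for u
      proof (rule card_subset_eq)
        show "finite (C - {u})" using T.finite_W by simp
        show "T.nbr u \<subseteq> C - {u}" using common_nbr_irrefl by (auto simp: T.nbr_def)
        show "card (T.nbr u) = card (C - {u})" using complete that T.finite_W by simp
      qed
      have "common_nbr V E u v" if "u \<in> C" "v \<in> C" "u \<noteq> v" for u v
      proof -
        have "v \<in> T.nbr u" using nbr_eq[OF that(1)] that(2,3) by blast
        then show ?thesis by (simp add: T.nbr_def)
      qed
      then have "iso_heawood V E"
        using iso_heawood_if_complete[OF connected C(1) _ closed] complete by simp
      then show False using not_heawood by simp
    qed
    then have "\<exists>I\<subseteq>C. T.independent I \<and> card C \<le> 6 * card I"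
      using T.large_independent_set[OF C(2)] by simp
    then show "\<exists>I\<subseteq>C. (\<forall>a\<in>I. \<forall>b\<in>I. \<not> common_nbr V E a b) \<and> card C \<le> 6 * card I"
      by (simp add: T.independent_def)
  next
    show "common_nbr V E v u" if "common_nbr V E u v" for u v
      using common_nbr_sym[OF that] .
  next
    show "v \<in> V" if "common_nbr V E u v" for u v
      using common_nbr_in_V[OF that] .
  qed
  then show ?thesis by (auto simp: open_packing_iff_common_nbr)
qed

theorem mainTheorem9:
  fixes V :: "'a set" and E :: "'a \<Rightarrow> 'a \<Rightarrow> bool"
  assumes "simple_graph V E"
    and "connected_graph V E"
    and "cubic V E"
    and "\<not> iso_heawood V E"
  shows "real_of_int (inv_signed_total_dom_num V E) \<ge> - (2 * real (card V) / 3)"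
proof -
  interpret cubic_graph V E using assms(1,3) by unfold_locales
  obtain I where I: "open_packing V E I" "card V \<le> 6 * card I"
    using large_open_packing assms(2,4) by blast
  have "2 * int (card I) - int (card V) \<le> inv_signed_total_dom_num V E"
    using inv_signed_total_dom_num_ge_open_packing[OF simple _ I(1)] card_nbhd by simp
  then have "2 * real (card I) - real (card V) \<le> real_of_int (inv_signed_total_dom_num V E)"
    by linarith
  moreover have "real (card V) \<le> 6 * real (card I)" using I(2) by linarith
  ultimately show ?thesis by linarith
qed

end
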